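(* Let $X$ be an abelian metric group and let $f:X\to\mathbb{R}$ be a subadditive function. The following conditions are equivalent: (a) $f$ is locally bounded at some point; (b) $f$ is a WNT-function; (c) $f$ is bounded above on some shift-compact set; (d) $f$ is bounded on some shift-compact set.
   Context: An abelian metric group is an abelian topological group whose topology is given by an invariant metric. $f$ is subadditive if $f(x+y)\le f(x)+f(y)$ for all $x,y\in X$. A set $A\subset X$ is shift-compact if for every sequence $(x_n)$ tending to $0$ in $X$ there exists $x\in X$ such that $\{n\in\mathbb{N}: x+x_n\in A\}$ is infinite. Locally bounded at a point means $|f|$ is bounded on some neighbourhood of that point. For $k\in\mathbb{N}$ let $H^k:=f^{-1}((-k,k))$. $f$ is a WNT-function if for every convergent sequence $(u_n)_{n\in\mathbb{N}}$ in $X$ there exist $k\in\mathbb{N}$, an infinite set $\mathbb{M}\subset\mathbb{N}$ and $t\in X$ such that $\{t+u_m: m\in\mathbb{M}\}\subset H^k$. *)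

theory Defs
  imports "HOL-Analysis.Analysis"
begin

text \<open>An abelian metric group: an abelian group carrying an invariant metric.
  (Invariance of the metric already makes addition and negation continuous.)\<close>
definition invariant_metric_group :: "('a::{metric_space, ab_group_add}) itself \<Rightarrow> bool" where
  "invariant_metric_group _ \<longleftrightarrow> (\<forall>x y z::'a. dist (x + z) (y + z) = dist x y)"

definition subadditive :: "('a::ab_group_add \<Rightarrow> real) \<Rightarrow> bool" where
  "subadditive f \<longleftrightarrow> (\<forall>x y. f (x + y) \<le> f x + f y)"

definition shift_compact :: "('a::{metric_space, ab_group_add}) set \<Rightarrow> bool" where
  "shift_compact A \<longleftrightarrow>
     (\<forall>xs::nat \<Rightarrow> 'a. xs \<longlonglongrightarrow> 0 \<longrightarrow> (\<exists>x. infinite {n. x + xs n \<in> A}))"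

definition locally_bounded_at :: "('a::topological_space \<Rightarrow> real) \<Rightarrow> 'a \<Rightarrow> bool" where
  "locally_bounded_at f x \<longleftrightarrow> (\<exists>U B. open U \<and> x \<in> U \<and> (\<forall>y\<in>U. \<bar>f y\<bar> \<le> B))"

definition H_level :: "('a \<Rightarrow> real) \<Rightarrow> nat \<Rightarrow> 'a set" where
  "H_level f k = f -` {- real k <..< real k}"

definition WNT_function :: "('a::{metric_space, ab_group_add} \<Rightarrow> real) \<Rightarrow> bool" where
  "WNT_function f \<longleftrightarrow>
     (\<forall>u::nat \<Rightarrow> 'a. convergent u \<longrightarrow>
        (\<exists>k M t. infinite M \<and> (\<lambda>m. t + u m) ` M \<subseteq> H_level f k))"

end

theory Submission
  imports Defs
begin

text \<open>Every condition is equivalent to \<open>f\<close> being bounded above on a ball around \<open>0\<close>.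
  Subadditivity gives \<open>f y \<le> f (t + y) + f (- t)\<close> and \<open>f 0 - f (- y) \<le> f y\<close>: the first
  transfers upper bounds from a shifted copy of a set back to the set, the second turns an
  upper bound on a symmetric ball into a two-sided one.  If \<open>f\<close> is not bounded above near
  \<open>0\<close>, a null sequence with \<open>f (x n) \<ge> n\<close> exists, and by the first inequality no shift of
  it can meet a set on which \<open>f\<close> is bounded above infinitely often; this refutes both the
  WNT property and the existence of a shift-compact set on which \<open>f\<close> is bounded above.\<close>

definition bounded_above_near_zero :: "('a::{metric_space, zero} \<Rightarrow> real) \<Rightarrow> bool" where
  "bounded_above_near_zero f \<longleftrightarrow> (\<exists>d>0. \<exists>B. \<forall>y. dist y 0 < d \<longrightarrow> f y \<le> B)"

lemma invariant_metric_group_dist_add_right: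
  fixes x y z :: "'a::{metric_space, ab_group_add}"
  assumes "invariant_metric_group TYPE('a)"
  shows "dist (x + z) (y + z) = dist x y"
  using assms unfolding invariant_metric_group_def by blast

lemma invariant_metric_group_dist_uminus_zero:
  fixes y :: "'a::{metric_space, ab_group_add}"
  assumes "invariant_metric_group TYPE('a)"
  shows "dist (- y) 0 = dist y 0"
  using invariant_metric_group_dist_add_right[OF assms, of "- y" y 0]
  by (simp add: dist_commute)

lemma invariant_metric_group_dist_diff_zero:
  fixes y L :: "'a::{metric_space, ab_group_add}"
  assumes "invariant_metric_group TYPE('a)"
  shows "dist (- L + y) 0 = dist y L"
  using invariant_metric_group_dist_add_right[OF assms, of "- L + y" L 0] by simp

lemma subadditive_le_shift:
  assumes "subadditive f"
  shows "f y \<le> f (t + y) + f (- t)"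
  using assms[unfolded subadditive_def, rule_format, of "t + y" "- t"] by simp

lemma subadditive_ge_uminus:
  assumes "subadditive f"
  shows "f 0 - f (- y) \<le> f y"
  using assms[unfolded subadditive_def, rule_format, of y "- y"] by simp

lemma subadditive_finite_shifted_sublevel:
  assumes "subadditive f" and "\<And>n. real n \<le> f (x n)"
  shows "finite {n. f (t + x n) \<le> C}"
proof (rule finite_subset)
  show "{n. f (t + x n) \<le> C} \<subseteq> {..nat \<lceil>C + f (- t)\<rceil>}"
  proof
    fix n assume "n \<in> {n. f (t + x n) \<le> C}"
    then have "real n \<le> C + f (- t)"
      using assms(2)[of n] subadditive_le_shift[OF assms(1), of "x n" t] by simp
    then show "n \<in> {..nat \<lceil>C + f (- t)\<rceil>}"
      by (simp add: le_nat_iff) (metis ceiling_mono ceiling_of_nat)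
  qed
qed simp

lemma not_bounded_above_near_zero_sequence:
  assumes "\<not> bounded_above_near_zero f"
  obtains x where "x \<longlonglongrightarrow> 0" and "\<And>n. real n \<le> f (x n)"
proof -
  have "\<exists>y. dist y 0 < 1 / Suc n \<and> real n \<le> f y" for n
  proof -
    have "\<not> (\<forall>y. dist y 0 < 1 / Suc n \<longrightarrow> f y \<le> real n)"
      using assms unfolding bounded_above_near_zero_def
      by (meson zero_less_divide_1_iff of_nat_0_less_iff zero_less_Suc)
    then show ?thesis by (meson linorder_not_le less_imp_le)
  qed
  then obtain x where x: "\<And>n. dist (x n) 0 < 1 / Suc n" "\<And>n. real n \<le> f (x n)"
    by metis
  have "(\<lambda>n. dist (x n) 0) \<longlonglongrightarrow> 0"
  proof (rule tendsto_sandwich[OF _ _ tendsto_const LIMSEQ_Suc[OF lim_inverse_n']])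
    show "\<forall>\<^sub>F n in sequentially. dist (x n) 0 \<le> 1 / real (Suc n)"
      using x(1) by (simp add: less_imp_le)
  qed simp
  then have "x \<longlonglongrightarrow> 0" by (rule tendsto_dist_iff[THEN iffD2])
  with x(2) that show ?thesis by blast
qed

lemma not_bounded_above_near_zero_escaping_sequence:
  assumes "subadditive f" and "\<not> bounded_above_near_zero f"
  obtains x where "x \<longlonglongrightarrow> 0" and "\<And>t C. finite {n. f (t + x n) \<le> C}"
  by (rule not_bounded_above_near_zero_sequence[OF assms(2)])
    (use subadditive_finite_shifted_sublevel[OF assms(1)] that in blast)

lemma bounded_above_near_zero_abs:
  assumes "invariant_metric_group TYPE('a::{metric_space, ab_group_add})"
    and "subadditive (f :: 'a \<Rightarrow> real)" and "bounded_above_near_zero f"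
  obtains d B where "d > 0" and "\<And>y. dist y 0 < d \<Longrightarrow> \<bar>f y\<bar> \<le> B"
proof -
  obtain d B where "d > 0" and B: "\<And>y. dist y 0 < d \<Longrightarrow> f y \<le> B"
    using assms(3) unfolding bounded_above_near_zero_def by blast
  moreover have "\<bar>f y\<bar> \<le> max B (B - f 0)" if "dist y 0 < d" for y
    using B[OF that] B[of "- y"] that subadditive_ge_uminus[OF assms(2), of y]
      invariant_metric_group_dist_uminus_zero[OF assms(1), of y]
    by auto
  ultimately show ?thesis using that by blast
qed

lemma shift_compact_ball_zero:
  assumes "d > 0"
  shows "shift_compact (ball (0::'a::{metric_space, ab_group_add}) d)"
  unfolding shift_compact_def
proof (intro allI impI exI)
  fix xs :: "nat \<Rightarrow> 'a" assume "xs \<longlonglongrightarrow> 0"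
  then have "\<forall>\<^sub>F n in sequentially. 0 + xs n \<in> ball 0 d"
    using assms by (auto dest: tendstoD simp: dist_commute)
  then show "infinite {n. 0 + xs n \<in> ball 0 d}"
    by (simp add: eventually_sequentially infinite_nat_iff_unbounded_le) (meson nat_le_linear)
qed

lemma locally_bounded_iff_bounded_above_near_zero:
  assumes "invariant_metric_group TYPE('a::{metric_space, ab_group_add})"
    and "subadditive (f :: 'a \<Rightarrow> real)"
  shows "(\<exists>x. locally_bounded_at f x) \<longleftrightarrow> bounded_above_near_zero f"
proof
  assume "\<exists>x. locally_bounded_at f x"
  then obtain x U B where "open U" "x \<in> U" and B: "\<And>y. y \<in> U \<Longrightarrow> \<bar>f y\<bar> \<le> B"
    unfolding locally_bounded_at_def by blast
  then obtain d where "d > 0" and d: "ball x d \<subseteq> U" using open_contains_ball by blast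
  have "f y \<le> B + f (- x)" if "dist y 0 < d" for y
  proof -
    have "x + y \<in> U"
      using d that invariant_metric_group_dist_add_right[OF assms(1), of y x 0]
      by (auto simp: dist_commute add.commute)
    then show ?thesis using B[of "x + y"] subadditive_le_shift[OF assms(2), of y x] by simp
  qed
  with \<open>d > 0\<close> show "bounded_above_near_zero f"
    unfolding bounded_above_near_zero_def by blast
next
  assume "bounded_above_near_zero f"
  then obtain d B where "d > 0" and "\<And>y. dist y 0 < d \<Longrightarrow> \<bar>f y\<bar> \<le> B"
    using bounded_above_near_zero_abs[OF assms] by blast
  then show "\<exists>x. locally_bounded_at f x"
    unfolding locally_bounded_at_def by (metis centre_in_ball dist_commute mem_ball open_ball)
qed

lemma WNT_function_iff_bounded_above_near_zero:
  assumes "invariant_metric_group TYPE('a::{metric_space, ab_group_add})"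
    and "subadditive (f :: 'a \<Rightarrow> real)"
  shows "WNT_function f \<longleftrightarrow> bounded_above_near_zero f"
proof
  assume W: "WNT_function f"
  show "bounded_above_near_zero f"
  proof (rule ccontr)
    assume "\<not> bounded_above_near_zero f"
    from not_bounded_above_near_zero_escaping_sequence[OF assms(2) this]
    obtain x where "x \<longlonglongrightarrow> 0" and escape: "\<And>t C. finite {n. f (t + x n) \<le> C}"
      by blast
    then have "convergent x" by (auto simp: convergent_def)
    with W obtain k M t where "infinite M" and "(\<lambda>m. t + x m) ` M \<subseteq> H_level f k"
      unfolding WNT_function_def by meson
    then have "M \<subseteq> {n. f (t + x n) \<le> real k}" by (auto simp: H_level_def)
    then have "finite M" by (rule finite_subset[OF _ escape])
    with \<open>infinite M\<close> show False by contradiction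
  qed
next
  assume "bounded_above_near_zero f"
  then obtain d B where "d > 0" and B: "\<And>y. dist y 0 < d \<Longrightarrow> \<bar>f y\<bar> \<le> B"
    using bounded_above_near_zero_abs[OF assms] by blast
  show "WNT_function f"
    unfolding WNT_function_def
  proof (intro allI impI)
    fix u :: "nat \<Rightarrow> 'a" assume "convergent u"
    then obtain L where "u \<longlonglongrightarrow> L" unfolding convergent_def by blast
    then obtain N where N: "\<And>n. n \<ge> N \<Longrightarrow> dist (u n) L < d"
      using metric_LIMSEQ_D \<open>d > 0\<close> by blast
    have "(\<lambda>m. - L + u m) ` {N..} \<subseteq> H_level f (nat \<lceil>B\<rceil> + 1)"
    proof (rule image_subsetI)
      fix m assume "m \<in> {N..}"
      then have "\<bar>f (- L + u m)\<bar> \<le> B"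
        using B N invariant_metric_group_dist_diff_zero[OF assms(1)] by simp
      then show "- L + u m \<in> H_level f (nat \<lceil>B\<rceil> + 1)"
        unfolding H_level_def
        by (simp add: abs_le_iff) (use le_of_int_ceiling[of B] in linarith)
    qed
    then show "\<exists>k M t. infinite M \<and> (\<lambda>m. t + u m) ` M \<subseteq> H_level f k"
      using infinite_Ici by blast
  qed
qed

lemma shift_compact_bounded_above_iff_bounded_above_near_zero:
  assumes "invariant_metric_group TYPE('a::{metric_space, ab_group_add})"
    and "subadditive (f :: 'a \<Rightarrow> real)"
  shows "(\<exists>A. shift_compact A \<and> (\<exists>C. \<forall>x\<in>A. f x \<le> C)) \<longleftrightarrow> bounded_above_near_zero f"
proof
  assume "\<exists>A. shift_compact A \<and> (\<exists>C. \<forall>x\<in>A. f x \<le> C)"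
  then obtain A C where A: "shift_compact A" and C: "\<forall>x\<in>A. f x \<le> C" by blast
  show "bounded_above_near_zero f"
  proof (rule ccontr)
    assume "\<not> bounded_above_near_zero f"
    from not_bounded_above_near_zero_escaping_sequence[OF assms(2) this]
    obtain x where "x \<longlonglongrightarrow> 0" and escape: "\<And>t C. finite {n. f (t + x n) \<le> C}"
      by blast
    then obtain t where "infinite {n. t + x n \<in> A}"
      using A unfolding shift_compact_def by blast
    moreover have "{n. t + x n \<in> A} \<subseteq> {n. f (t + x n) \<le> C}" using C by blast
    ultimately show False using escape finite_subset by blast
  qed
next
  assume "bounded_above_near_zero f"
  then show "\<exists>A. shift_compact A \<and> (\<exists>C. \<forall>x\<in>A. f x \<le> C)"
    unfolding bounded_above_near_zero_def
    by (metis shift_compact_ball_zero mem_ball dist_commute)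
qed

lemma shift_compact_bounded_iff_bounded_above_near_zero:
  assumes "invariant_metric_group TYPE('a::{metric_space, ab_group_add})"
    and "subadditive (f :: 'a \<Rightarrow> real)"
  shows "(\<exists>A. shift_compact A \<and> (\<exists>C. \<forall>x\<in>A. \<bar>f x\<bar> \<le> C)) \<longleftrightarrow> bounded_above_near_zero f"
proof
  assume "\<exists>A. shift_compact A \<and> (\<exists>C. \<forall>x\<in>A. \<bar>f x\<bar> \<le> C)"
  then have "\<exists>A. shift_compact A \<and> (\<exists>C. \<forall>x\<in>A. f x \<le> C)" by (meson abs_le_D1)
  then show "bounded_above_near_zero f"
    using shift_compact_bounded_above_iff_bounded_above_near_zero[OF assms] by blast
next
  assume "bounded_above_near_zero f"
  then obtain d B where "d > 0" and "\<And>y. dist y 0 < d \<Longrightarrow> \<bar>f y\<bar> \<le> B"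
    using bounded_above_near_zero_abs[OF assms] by blast
  then show "\<exists>A. shift_compact A \<and> (\<exists>C. \<forall>x\<in>A. \<bar>f x\<bar> \<le> C)"
    by (metis shift_compact_ball_zero mem_ball dist_commute)
qed

theorem corollary3p8:
  fixes f :: "'a::{metric_space, ab_group_add} \<Rightarrow> real"
  assumes "invariant_metric_group TYPE('a)"
    and "subadditive f"
  shows "((\<exists>x. locally_bounded_at f x) \<longleftrightarrow> WNT_function f)
       \<and> (WNT_function f \<longleftrightarrow> (\<exists>A. shift_compact A \<and> (\<exists>C. \<forall>x\<in>A. f x \<le> C)))
       \<and> ((\<exists>A. shift_compact A \<and> (\<exists>C. \<forall>x\<in>A. f x \<le> C))
            \<longleftrightarrow> (\<exists>A. shift_compact A \<and> (\<exists>C. \<forall>x\<in>A. \<bar>f x\<bar> \<le> C)))"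
  using locally_bounded_iff_bounded_above_near_zero[OF assms]
    WNT_function_iff_bounded_above_near_zero[OF assms]
    shift_compact_bounded_above_iff_bounded_above_near_zero[OF assms]
    shift_compact_bounded_iff_bounded_above_near_zero[OF assms]
  by blast

end
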